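(* There exists a distribution $F$ on $\mathbb{R}$ with $q_1:=F([0,\infty))\in(0,1)$ such that: $F_2$ is heavy-tailed; $F_1$ is not locally almost decreasing; $F_1\in\mathcal{S}_{loc}$, i.e. for every $d>0$, $F_1\in\mathcal{L}_{\Delta_d}$ and $F_1^{*2}(x+\Delta_d)\sim 2F_1(x+\Delta_d)$; but the relation $F^{*2}(x+\Delta_d)\sim 2F(x+\Delta_d)$ does not hold (so $F$ does not belong to $\mathcal{S}_{loc}$ in the sense of this relation).
   Context: For a distribution $G$ and $d>0$ write $G(x+\Delta_d):=G((x,x+d])$, and $G^{*2}$ for the convolution of $G$ with itself; $a(x)\sim b(x)$ means $a(x)/b(x)\to1$ as $x\to\infty$. For $d>0$, $G\in\mathcal{L}_{\Delta_d}$ if $G(x+\Delta_d)>0$ for all sufficiently large $x$ and for every $t>0$, $G(x+s+\Delta_d)\sim G(x+\Delta_d)$ uniformly in $|s|\le t$; $\mathcal{S}_{loc}$ is the class of $G$ such that for every $d>0$, $G\in\mathcal{L}_{\Delta_d}$ and $G^{*2}(x+\Delta_d)\sim2G(x+\Delta_d)$. For a distribution $F$ on $\mathbb{R}$ with $q_1=F([0,\infty))\in(0,1)$ and $q_2=F((-\infty,0))=1-q_1$, define $F_1(dy)=q_1^{-1}F(dy)\mathbf 1_{[0,\infty)}(y)$ and $F_2(dy)=q_2^{-1}F(dy)\mathbf 1_{(-\infty,0)}(y)$, so $F=q_1F_1+q_2F_2$. Let $-X_2$ be a random variable with distribution $F_2$; $F_2$ is heavy-tailed if $E e^{\varepsilon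 X_2}=\infty$ for every $\varepsilon>0$. $F_1$ is locally almost decreasing if there is $x_0\ge0$ such that for every $d>0$, $F_1(x+\Delta_d)>0$ for $x\ge x_0$ and $\sup_{x_0\le x\le y<\infty}F_1(y+\Delta_d)/F_1(x+\Delta_d)<\infty$. *)

theory Defs
  imports "HOL-Probability.Probability" "HOL-Library.Landau_Symbols"
begin

definition is_real_distr :: "real measure \<Rightarrow> bool" where
  "is_real_distr G \<longleftrightarrow> prob_space G \<and> sets G = sets borel"

text \<open>G(x + Delta_d) = G((x, x+d])\<close>
definition loc :: "real measure \<Rightarrow> real \<Rightarrow> real \<Rightarrow> real" where
  "loc G d x = measure G {x<..x+d}"

definition in_L_Delta :: "real \<Rightarrow> real measure \<Rightarrow> bool" where
  "in_L_Delta d G \<longleftrightarrow>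
     (\<forall>\<^sub>F x in at_top. loc G d x > 0) \<and>
     (\<forall>t>0. \<forall>\<epsilon>>0. \<forall>\<^sub>F x in at_top. \<forall>s. \<bar>s\<bar> \<le> t \<longrightarrow>
          \<bar>loc G d (x + s) / loc G d x - 1\<bar> \<le> \<epsilon>)"

definition S_loc :: "real measure \<Rightarrow> bool" where
  "S_loc G \<longleftrightarrow> (\<forall>d>0. in_L_Delta d G \<and>
      (loc (G \<star> G) d) \<sim>[at_top] (\<lambda>x. 2 * loc G d x))"

definition q1 :: "real measure \<Rightarrow> real" where
  "q1 F = measure F {0..}"

definition F1 :: "real measure \<Rightarrow> real measure" where
  "F1 F = density F (\<lambda>y. ennreal (indicator {0..} y / q1 F))"

definition F2 :: "real measure \<Rightarrow> real measure" where
  "F2 F = density F (\<lambda>y. ennreal (indicator {..<0} y / (1 - q1 F)))"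

definition heavy_tailed_F2 :: "real measure \<Rightarrow> bool" where
  "heavy_tailed_F2 F \<longleftrightarrow>
     (\<forall>\<epsilon>>0. (\<integral>\<^sup>+ y. ennreal (exp (\<epsilon> * (- y))) \<partial>(F2 F)) = \<infinity>)"

definition locally_almost_decreasing :: "real measure \<Rightarrow> bool" where
  "locally_almost_decreasing G \<longleftrightarrow>
     (\<exists>x0\<ge>0. \<forall>d>0. (\<forall>x\<ge>x0. loc G d x > 0) \<and>
        bdd_above {loc G d y / loc G d x | x y. x0 \<le> x \<and> x \<le> y})"

end

theory Submission
  imports Defs "HOL-Real_Asymp.Real_Asymp"
begin

text \<open>
  Take for \<open>F\<close> the equal mixture of the density \<open>1 / y\<^sup>2\<close> on \<open>(-\<infinity>, -1]\<close>, which makes \<open>F\<^sub>2\<close>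
  heavy-tailed, and of a density proportional to
  \<open>g x = x\<^sup>-\<^sup>2 * exp (-20 * dist (ln x) {2 ^ k | k. True})\<close> on \<open>[1, \<infinity>)\<close>.
  Since \<open>ln (g (exp t))\<close> is 22-Lipschitz in \<open>t\<close>, the density of \<open>F\<^sub>1\<close> changes by at most a bounded
  factor over \<open>[z/4, 4z]\<close> and by a factor tending to 1 over \<open>[z - t, z + t]\<close>. For a distribution on
  \<open>[0, \<infinity>)\<close> this gives \<open>F\<^sub>1\<^sup>*\<^sup>2(z + \<Delta>) \<sim> 2 F\<^sub>1(z + \<Delta>)\<close>: one of the two summands is at most \<open>z/2 + d\<close>,
  it is bounded with high probability, and then the other one lies in a bounded window around \<open>z\<close>.
  Yet \<open>g\<close> dips midway between consecutive dyadic points of the logarithmic scale: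
  \<open>g x \<le> exp (-9 * 2 ^ k) * g y\<close> for \<open>x = exp (3 * 2 ^ k / 2)\<close> and \<open>y = exp (2 * 2 ^ k)\<close>. Hence \<open>F\<^sub>1\<close>
  is not locally almost decreasing, and for \<open>F\<close> itself the event that one summand lies near \<open>-y\<close>
  and the other near \<open>x + y\<close> contributes about \<open>g y / y\<^sup>2\<close> to \<open>F\<^sup>*\<^sup>2(x + \<Delta>\<^sub>1)\<close>, which exceeds
  \<open>F(x + \<Delta>\<^sub>1)\<close> by a factor of order \<open>exp (5 * 2 ^ k)\<close>.
\<close>

section \<open>Self-convolutions of distributions on the half-line\<close>

lemma (in real_distribution) eventually_prob_Ioi_less:
  assumes "0 < \<delta>"
  shows "\<forall>\<^sub>F x in at_top. prob {x<..} < \<delta>"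
proof -
  have "\<forall>\<^sub>F x in at_top. 1 - \<delta> < cdf M x"
    using assms by (intro order_tendstoD(1)[OF cdf_lim_at_top_prob]) auto
  moreover have "prob {x<..} = 1 - cdf M x" for x
    using prob_compl[of "{..x}"] by (simp add: cdf_def Compl_eq_Diff_UNIV[symmetric] Compl_atMost)
  ultimately show ?thesis
    by (auto elim: eventually_mono)
qed

lemma nn_integral_indicator_Ioc_shift:
  fixes G :: "real measure"
  assumes "prob_space G" and "sets G = sets borel"
  shows "(\<integral>\<^sup>+x. indicator {z<..z+d} (x + y) \<partial>G) = ennreal (loc G d (z - y))"
proof -
  interpret prob_space G by fact
  have "(\<integral>\<^sup>+x. indicator {z<..z+d} (x + y) \<partial>G) = (\<integral>\<^sup>+x. indicator {z-y<..z-y+d} x \<partial>G)"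
    by (intro nn_integral_cong) (auto simp: indicator_def)
  also have "\<dots> = emeasure G {z-y<..z-y+d}"
    using assms(2) by (intro nn_integral_indicator) auto
  finally show ?thesis by (simp add: loc_def emeasure_eq_measure)
qed

lemma emeasure_convolution_Ioc:
  fixes G :: "real measure"
  assumes "prob_space G" and "sets G = sets borel"
  shows "emeasure (G \<star> G) {z<..z+d} = (\<integral>\<^sup>+x. ennreal (loc G d (z - x)) \<partial>G)"
proof -
  interpret prob_space G by fact
  have "emeasure (G \<star> G) {z<..z+d} = (\<integral>\<^sup>+x. \<integral>\<^sup>+y. indicator {z<..z+d} (x + y) \<partial>G \<partial>G)"
    using assms(2) by (intro convolution_emeasure') (auto simp: finite_measure_axioms)
  also have "\<dots> = (\<integral>\<^sup>+x. ennreal (loc G d (z - x)) \<partial>G)"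
    using nn_integral_indicator_Ioc_shift[OF assms, of z d] by (simp add: add.commute)
  finally show ?thesis .
qed

lemma emeasure_convolution_eq_loc:
  fixes G :: "real measure"
  assumes "prob_space G" and "sets G = sets borel"
  shows "emeasure (G \<star> G) {z<..z+d} = ennreal (loc (G \<star> G) d z)"
proof -
  interpret prob_space G by fact
  have "finite_measure (G \<star> G)"
    using assms(2) by (intro convolution_finite) (auto simp: finite_measure_axioms)
  then show ?thesis by (simp add: loc_def finite_measure.emeasure_eq_measure)
qed

lemma loc_convolution_ge_measure:
  fixes G :: "real measure"
  assumes G: "prob_space G" and sG: "sets G = sets borel" and B: "B \<in> sets borel" and a: "0 \<le> a"
    and near: "\<And>v. v \<in> B \<Longrightarrow> a \<le> loc G d (z - v)"
  shows "a * measure G B \<le> loc (G \<star> G) d z"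
proof -
  interpret prob_space G by fact
  have "ennreal (a * measure G B) = (\<integral>\<^sup>+v. ennreal a * indicator B v \<partial>G)"
    using a B sG by (simp add: nn_integral_cmult_indicator emeasure_eq_measure ennreal_mult)
  also have "\<dots> \<le> (\<integral>\<^sup>+v. ennreal (loc G d (z - v)) \<partial>G)"
    by (intro nn_integral_mono) (auto simp: indicator_def intro: ennreal_leI near)
  also have "\<dots> = ennreal (loc (G \<star> G) d z)"
    by (simp add: emeasure_convolution_Ioc[OF G sG, symmetric] emeasure_convolution_eq_loc[OF G sG])
  finally show ?thesis
    using measure_nonneg[of "G \<star> G" "{z<..z+d}"] by (auto simp: ennreal_le_iff2 loc_def)
qed

lemma nn_integral_convolution_split:
  fixes G :: "real measure"
  assumes G: "prob_space G" and sG[measurable_cong]: "sets G = sets borel"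
  shows "(\<integral>\<^sup>+x. \<integral>\<^sup>+y. (indicator {..c} x + indicator {..c} y) * indicator {z<..z+d} (x + y) \<partial>G \<partial>G)
       = 2 * (\<integral>\<^sup>+x. indicator {..c} x * ennreal (loc G d (z - x)) \<partial>G)"
    (is "?lhs = 2 * ?H")
proof -
  interpret prob_space G by fact
  interpret pair_sigma_finite G G ..
  let ?A = "{z<..z+d}"
  have small_x: "(\<integral>\<^sup>+x. \<integral>\<^sup>+y. indicator {..c} x * indicator ?A (x + y) \<partial>G \<partial>G) = ?H"
    using nn_integral_indicator_Ioc_shift[OF G sG, of z d]
    by (intro nn_integral_cong) (simp add: nn_integral_cmult add.commute)
  have "(\<integral>\<^sup>+x. \<integral>\<^sup>+y. indicator {..c} y * indicator ?A (x + y) \<partial>G \<partial>G)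
      = (\<integral>\<^sup>+y. \<integral>\<^sup>+x. indicator {..c} y * indicator ?A (x + y) \<partial>G \<partial>G)"
    by (rule Fubini') simp
  also have "\<dots> = ?H"
    by (intro nn_integral_cong) (simp add: nn_integral_cmult nn_integral_indicator_Ioc_shift[OF G sG])
  finally have small_y: "(\<integral>\<^sup>+x. \<integral>\<^sup>+y. indicator {..c} y * indicator ?A (x + y) \<partial>G \<partial>G) = ?H" .
  have "?lhs = (\<integral>\<^sup>+x. (\<integral>\<^sup>+y. indicator {..c} x * indicator ?A (x + y) \<partial>G)
                    + (\<integral>\<^sup>+y. indicator {..c} y * indicator ?A (x + y) \<partial>G) \<partial>G)"
    by (intro nn_integral_cong) (simp add: distrib_right nn_integral_add)
  also have "\<dots> = (\<integral>\<^sup>+x. \<integral>\<^sup>+y. indicator {..c} x * indicator ?A (x + y) \<partial>G \<partial>G)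
                + (\<integral>\<^sup>+x. \<integral>\<^sup>+y. indicator {..c} y * indicator ?A (x + y) \<partial>G \<partial>G)"
    by (rule nn_integral_add) auto
  finally show ?thesis by (simp add: small_x small_y mult_2)
qed

lemma loc_convolution_le_twice:
  fixes G :: "real measure"
  assumes G: "prob_space G" and sG[measurable_cong]: "sets G = sets borel"
    and nonneg: "AE x in G. 0 \<le> x" and c: "z + d \<le> 2 * c" and ab: "0 \<le> a" "0 \<le> b"
    and near: "\<And>x. 0 \<le> x \<Longrightarrow> x \<le> M \<Longrightarrow> loc G d (z - x) \<le> a"
    and far: "\<And>x. M < x \<Longrightarrow> x \<le> c \<Longrightarrow> loc G d (z - x) \<le> b"
  shows "loc (G \<star> G) d z \<le> 2 * (a + b * measure G {M<..})"
proof -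
  interpret prob_space G by fact
  let ?A = "{z<..z+d}"
  have "emeasure (G \<star> G) ?A = (\<integral>\<^sup>+x. \<integral>\<^sup>+y. indicator ?A (x + y) \<partial>G \<partial>G)"
    using sG by (intro convolution_emeasure') (auto simp: finite_measure_axioms)
  also have "\<dots> \<le> (\<integral>\<^sup>+x. \<integral>\<^sup>+y. (indicator {..c} x + indicator {..c} y) * indicator ?A (x + y) \<partial>G \<partial>G)"
    using c by (intro nn_integral_mono) (auto simp: indicator_def)
  also have "\<dots> = 2 * (\<integral>\<^sup>+x. indicator {..c} x * ennreal (loc G d (z - x)) \<partial>G)"
    by (rule nn_integral_convolution_split[OF G sG])
  also have "(\<integral>\<^sup>+x. indicator {..c} x * ennreal (loc G d (z - x)) \<partial>G)
      \<le> (\<integral>\<^sup>+x. ennreal a * indicator {..M} x + ennreal b * indicator {M<..} x \<partial>G)"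
    by (intro nn_integral_mono_AE eventually_mono[OF nonneg])
      (auto simp: indicator_def not_less intro: ennreal_leI near far)
  also have "\<dots> = ennreal (a * prob {..M} + b * prob {M<..})"
    using sG ab by (simp add: nn_integral_add nn_integral_cmult_indicator emeasure_eq_measure ennreal_mult)
  also have "\<dots> \<le> ennreal (a + b * prob {M<..})"
    using ab by (intro ennreal_leI add_mono mult_left_le) auto
  finally have "ennreal (loc (G \<star> G) d z) \<le> ennreal (2 * (a + b * prob {M<..}))"
    using ab by (simp add: emeasure_convolution_eq_loc[OF G sG] ennreal_mult' mult_left_mono)
  moreover have "0 \<le> 2 * (a + b * prob {M<..})"
    using ab by simp
  ultimately show ?thesis
    by (metis ennreal_le_iff)
qed

lemma loc_convolution_ge_twice:
  fixes G :: "real measure"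
  assumes G: "prob_space G" and sG[measurable_cong]: "sets G = sets borel"
    and nonneg: "AE x in G. 0 \<le> x" and M: "2 * M \<le> z" and a: "0 \<le> a"
    and near: "\<And>x. 0 \<le> x \<Longrightarrow> x \<le> M \<Longrightarrow> a \<le> loc G d (z - x)"
  shows "2 * (a * measure G {..M}) \<le> loc (G \<star> G) d z"
proof -
  interpret prob_space G by fact
  let ?A = "{z<..z+d}"
  have "ennreal (2 * (a * prob {..M})) = 2 * (\<integral>\<^sup>+x. ennreal a * indicator {..M} x \<partial>G)"
    using sG a by (simp add: nn_integral_cmult_indicator emeasure_eq_measure ennreal_mult)
  also have "\<dots> \<le> 2 * (\<integral>\<^sup>+x. indicator {..M} x * ennreal (loc G d (z - x)) \<partial>G)"
    by (intro mult_left_mono nn_integral_mono_AE eventually_mono[OF nonneg])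
      (auto simp: indicator_def intro: ennreal_leI near)
  also have "\<dots> = (\<integral>\<^sup>+x. \<integral>\<^sup>+y. (indicator {..M} x + indicator {..M} y) * indicator ?A (x + y) \<partial>G \<partial>G)"
    by (rule nn_integral_convolution_split[OF G sG, symmetric])
  also have "\<dots> \<le> (\<integral>\<^sup>+x. \<integral>\<^sup>+y. indicator ?A (x + y) \<partial>G \<partial>G)"
    using M by (intro nn_integral_mono) (auto simp: indicator_def)
  also have "\<dots> = ennreal (loc (G \<star> G) d z)"
    using sG by (simp add: convolution_emeasure'[symmetric] finite_measure_axioms
        emeasure_convolution_eq_loc[OF G sG])
  finally show ?thesis
    using measure_nonneg[of "G \<star> G" ?A] by (auto simp: ennreal_le_iff2 loc_def)
qed

lemma loc_convolution_ratio_bounds: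
  fixes G :: "real measure"
  assumes G: "prob_space G" and sG: "sets G = sets borel" and nonneg: "AE x in G. 0 \<le> x"
    and d: "0 < d" and M: "0 \<le> M" "2 * M \<le> z" and l: "0 < loc G d z" and \<delta>: "\<delta> \<le> 1"
    and near: "\<And>x. 0 \<le> x \<Longrightarrow> x \<le> M \<Longrightarrow> \<bar>loc G d (z - x) - loc G d z\<bar> \<le> \<delta> * loc G d z"
    and dom: "\<And>u. u \<in> {z/2 - d..z} \<Longrightarrow> loc G d u \<le> C * loc G d z"
  shows "(1 - \<delta>) * measure G {..M} \<le> loc (G \<star> G) d z / (2 * loc G d z)"
    and "loc (G \<star> G) d z / (2 * loc G d z) \<le> 1 + \<delta> + C * measure G {M<..}"
proof -
  have "0 \<le> \<delta> * loc G d z" "loc G d z \<le> C * loc G d z"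
    using near[of 0] dom[of z] M d by auto
  then have \<delta>_nonneg: "0 \<le> \<delta>" and C: "0 \<le> C * loc G d z"
    using l by (simp_all add: zero_le_mult_iff)
  have "2 * ((1 - \<delta>) * loc G d z * measure G {..M}) \<le> loc (G \<star> G) d z"
  proof (rule loc_convolution_ge_twice[OF G sG nonneg])
    show "(1 - \<delta>) * loc G d z \<le> loc G d (z - x)" if "0 \<le> x" "x \<le> M" for x
      using near[OF that] by (simp add: abs_le_iff algebra_simps)
  qed (use M l \<delta> in auto)
  then show "(1 - \<delta>) * measure G {..M} \<le> loc (G \<star> G) d z / (2 * loc G d z)"
    using l by (simp add: field_simps)
  have "loc (G \<star> G) d z \<le> 2 * ((1 + \<delta>) * loc G d z + C * loc G d z * measure G {M<..})"
  proof (rule loc_convolution_le_twice[OF G sG nonneg, where c = "z/2 + d"])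
    show "loc G d (z - x) \<le> (1 + \<delta>) * loc G d z" if "0 \<le> x" "x \<le> M" for x
      using near[OF that] by (simp add: abs_le_iff algebra_simps)
    show "loc G d (z - x) \<le> C * loc G d z" if "M < x" "x \<le> z/2 + d" for x
      using dom[of "z - x"] that M by simp
  qed (use d l C \<delta>_nonneg in auto)
  then show "loc (G \<star> G) d z / (2 * loc G d z) \<le> 1 + \<delta> + C * measure G {M<..}"
    using l by (simp add: field_simps)
qed

lemma eventually_loc_convolution_ratio_bounds:
  fixes G :: "real measure"
  assumes G: "prob_space G" and sG: "sets G = sets borel" and nonneg: "AE x in G. 0 \<le> x"
    and d: "0 < d" and L: "in_L_Delta d G"
    and dominated: "\<forall>\<^sub>F z in at_top. \<forall>u\<in>{z/2 - d..z}. loc G d u \<le> C * loc G d z"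
    and \<delta>: "0 < \<delta>" "\<delta> \<le> 1"
  shows "\<forall>\<^sub>F z in at_top. (1 - \<delta>)\<^sup>2 \<le> loc (G \<star> G) d z / (2 * loc G d z) \<and>
           loc (G \<star> G) d z / (2 * loc G d z) \<le> 1 + (1 + \<bar>C\<bar>) * \<delta>"
proof -
  interpret real_distribution G
    using G sG by (simp add: real_distribution_def real_distribution_axioms_def)
  obtain M where M: "0 < M" "prob {M<..} < \<delta>"
    using eventually_happens'[OF trivial_limit_at_top_linorder
        eventually_conj[OF eventually_gt_at_top[of 0] eventually_prob_Ioi_less[OF \<delta>(1)]]] by blast
  have "\<forall>\<^sub>F z in at_top. 0 < loc G d z"
    and "\<forall>\<^sub>F z in at_top. \<forall>s. \<bar>s\<bar> \<le> M \<longrightarrow> \<bar>loc G d (z + s) / loc G d z - 1\<bar> \<le> \<delta>"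
    using L M(1) \<delta>(1) unfolding in_L_Delta_def by blast+
  with dominated eventually_ge_at_top[of "2 * M"] show ?thesis
  proof eventually_elim
    case (elim z)
    then have l: "0 < loc G d z"
      by blast
    have near: "\<bar>loc G d (z - x) - loc G d z\<bar> \<le> \<delta> * loc G d z" if "0 \<le> x" "x \<le> M" for x
    proof -
      have "\<bar>loc G d (z + - x) / loc G d z - 1\<bar> \<le> \<delta>"
        using elim(4)[rule_format, of "-x"] that by simp
      then show ?thesis
        using l by (simp add: abs_le_iff field_simps)
    qed
    from elim have "2 * M \<le> z" and "\<And>u. u \<in> {z/2 - d..z} \<Longrightarrow> loc G d u \<le> C * loc G d z"
      by auto
    note bounds = loc_convolution_ratio_bounds[OF G sG nonneg d less_imp_le[OF M(1)] this(1) l \<delta>(2) near this(2)]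
    have "C * prob {M<..} \<le> \<bar>C\<bar> * \<delta>"
      using M(2) by (intro order.trans[OF abs_ge_self[of "C * _", unfolded abs_mult]] mult_left_mono) auto
    with bounds(2) have "loc (G \<star> G) d z / (2 * loc G d z) \<le> 1 + (1 + \<bar>C\<bar>) * \<delta>"
      by (simp add: algebra_simps)
    moreover have "(1 - \<delta>)\<^sup>2 \<le> (1 - \<delta>) * prob {..M}"
      using M(2) \<delta> prob_compl[of "{..M}"] unfolding power2_eq_square
      by (intro mult_left_mono) (auto simp: Compl_eq_Diff_UNIV[symmetric] Compl_atMost)
    ultimately show ?case
      using bounds(1) by simp
  qed
qed

lemma loc_convolution_asymp_equiv:
  fixes G :: "real measure"
  assumes "prob_space G" "sets G = sets borel" "AE x in G. 0 \<le> x" "0 < d" "in_L_Delta d G"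
    and "\<forall>\<^sub>F z in at_top. \<forall>u\<in>{z/2 - d..z}. loc G d u \<le> C * loc G d z"
  shows "loc (G \<star> G) d \<sim>[at_top] (\<lambda>z. 2 * loc G d z)"
proof (rule asymp_equivI', rule tendstoI)
  fix e :: real
  assume e: "0 < e"
  define \<delta> where "\<delta> = min 1 (e / (3 * (\<bar>C\<bar> + 1)))"
  have "\<delta> \<le> e / (3 * (\<bar>C\<bar> + 1))"
    by (simp add: \<delta>_def)
  then have "(1 + \<bar>C\<bar>) * \<delta> \<le> e / 3"
    by (simp add: field_simps)
  moreover have "0 < \<delta>" "\<delta> \<le> 1"
    using e by (simp add: \<delta>_def, simp only: \<delta>_def min.cobounded1)
  moreover from this have "\<delta> \<le> (1 + \<bar>C\<bar>) * \<delta>" "1 - 2 * \<delta> \<le> (1 - \<delta>)\<^sup>2"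
    by (simp_all add: algebra_simps power2_eq_square)
  ultimately have \<delta>: "0 < \<delta>" "\<delta> \<le> 1" "1 + (1 + \<bar>C\<bar>) * \<delta> < 1 + e" "1 - e < (1 - \<delta>)\<^sup>2"
    using e by linarith+
  show "\<forall>\<^sub>F z in at_top. dist (loc (G \<star> G) d z / (2 * loc G d z)) 1 < e"
    using eventually_loc_convolution_ratio_bounds[OF assms \<delta>(1,2)]
    by eventually_elim (use \<delta>(3,4) in \<open>auto simp: dist_real_def abs_less_iff\<close>)
qed

lemma S_locI_nonneg:
  fixes G :: "real measure"
  assumes "prob_space G" "sets G = sets borel" "AE x in G. 0 \<le> x"
    and "\<And>d. 0 < d \<Longrightarrow> in_L_Delta d G"
    and "\<And>d. 0 < d \<Longrightarrow> \<exists>C. \<forall>\<^sub>F z in at_top. \<forall>u\<in>{z/2 - d..z}. loc G d u \<le> C * loc G d z"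
  shows "S_loc G"
  using loc_convolution_asymp_equiv[OF assms(1-3)] assms(4,5) unfolding S_loc_def by blast

section \<open>Elementary estimates\<close>

lemma loc_density_bounds:
  fixes h :: "real \<Rightarrow> real"
  assumes [measurable]: "h \<in> borel_measurable borel" and "\<And>x. 0 \<le> h x" and "0 < d" "0 \<le> a"
    and h: "\<And>u. u \<in> {z<..z+d} \<Longrightarrow> a \<le> h u \<and> h u \<le> b"
  shows "a * d \<le> loc (density lborel h) d z" and "loc (density lborel h) d z \<le> b * d"
proof -
  have "a \<le> h (z + d) \<and> h (z + d) \<le> b"
    using assms(3) by (intro h) simp
  then have b: "0 \<le> b"
    using assms(4) by linarith
  have emeasure: "emeasure (density lborel h) {z<..z+d} = (\<integral>\<^sup>+x. ennreal (h x) * indicator {z<..z+d} x \<partial>lborel)"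
    by (rule emeasure_density) auto
  have "ennreal (a * d) = (\<integral>\<^sup>+x. ennreal a * indicator {z<..z+d} x \<partial>lborel)"
    using assms by (subst nn_integral_cmult_indicator) (auto simp: ennreal_mult)
  also have "\<dots> \<le> emeasure (density lborel h) {z<..z+d}"
    unfolding emeasure by (intro nn_integral_mono) (auto simp: indicator_def h ennreal_leI)
  finally have lower: "ennreal (a * d) \<le> emeasure (density lborel h) {z<..z+d}" .
  have "emeasure (density lborel h) {z<..z+d} \<le> (\<integral>\<^sup>+x. ennreal b * indicator {z<..z+d} x \<partial>lborel)"
    unfolding emeasure by (intro nn_integral_mono) (auto simp: indicator_def h ennreal_leI)
  also have "\<dots> = ennreal (b * d)"
    using assms b by (subst nn_integral_cmult_indicator) (auto simp: ennreal_mult)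
  finally have upper: "emeasure (density lborel h) {z<..z+d} \<le> ennreal (b * d)" .
  then have finite: "emeasure (density lborel h) {z<..z+d} = ennreal (loc (density lborel h) d z)"
    unfolding loc_def by (intro emeasure_eq_ennreal_measure) (auto simp: top_unique)
  show "a * d \<le> loc (density lborel h) d z"
    using lower unfolding finite by (simp add: loc_def)
  show "loc (density lborel h) d z \<le> b * d"
    using upper b assms(3) unfolding finite by simp
qed

lemma nn_integral_divide_const:
  fixes f :: "'a \<Rightarrow> real"
  assumes "f \<in> borel_measurable M" "\<And>x. 0 \<le> f x" "0 < c" "(\<integral>\<^sup>+x. ennreal (f x) \<partial>M) = ennreal I"
  shows "(\<integral>\<^sup>+x. ennreal (f x / c) \<partial>M) = ennreal (I / c)"
proof -
  have "(\<integral>\<^sup>+x. ennreal (f x / c) \<partial>M) = (\<integral>\<^sup>+x. ennreal (f x) * ennreal (1 / c) \<partial>M)"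
    using assms(3) by (intro nn_integral_cong) (simp add: ennreal_mult''[symmetric])
  also have "\<dots> = (\<integral>\<^sup>+x. ennreal (f x) \<partial>M) * ennreal (1 / c)"
    using assms(1) by (intro nn_integral_multc) measurable
  also have "\<dots> = ennreal (I / c)"
    using assms(3,4) by (simp add: ennreal_mult''[symmetric])
  finally show ?thesis .
qed

lemma nn_integral_inverse_square_Ici: "(\<integral>\<^sup>+x. ennreal (indicator {1..} x / x\<^sup>2) \<partial>lborel) = 1"
proof -
  have "((\<lambda>x::real. 1 / x ^ 2) has_integral 1) {1..}"
    using has_integral_inverse_power_to_inf[of 2 1] by simp
  then have "((\<lambda>x::real. if x \<in> {1..} then 1 / x\<^sup>2 else 0) has_integral 1) UNIV"
    by (simp only: has_integral_restrict_UNIV)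
  then have "((\<lambda>x::real. indicator {1..} x / x\<^sup>2) has_integral 1) UNIV"
    by (rule has_integral_eq[rotated]) (simp add: indicator_def)
  then show ?thesis
    by (subst nn_integral_has_integral_lborel) auto
qed

lemma nn_integral_inverse_square_Iic: "(\<integral>\<^sup>+x. ennreal (indicator {..-1} x / x\<^sup>2) \<partial>lborel) = 1"
proof -
  have "(\<integral>\<^sup>+x. ennreal (indicator {..-1} x / x\<^sup>2) \<partial>lborel)
      = (\<integral>\<^sup>+x. ennreal (indicator {..-1} x / x\<^sup>2) \<partial>distr lborel borel uminus)"
    by (simp add: lborel_distr_uminus)
  also have "\<dots> = (\<integral>\<^sup>+x. ennreal (indicator {1..} x / x\<^sup>2) \<partial>lborel)"
    by (subst nn_integral_distr) (auto intro!: nn_integral_cong simp: indicator_def)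
  finally show ?thesis
    by (simp only: nn_integral_inverse_square_Ici)
qed

lemma emeasure_lborel_atMost: "emeasure lborel {..a::real} = \<infinity>"
proof (rule ccontr)
  assume "emeasure lborel {..a} \<noteq> \<infinity>"
  then obtain r where r: "emeasure lborel {..a} = ennreal r" "0 \<le> r"
    by (metis ennreal_cases infinity_ennreal_def)
  have "ennreal (r + 1) = emeasure lborel {a - (r + 1)<..a}"
    using r by simp
  also have "\<dots> \<le> emeasure lborel {..a}"
    by (intro emeasure_mono) auto
  finally show False
    using r by simp
qed

lemma abs_ratio_le_of_bounds:
  fixes A q x y :: real
  assumes "0 < A" "1 \<le> q" "A / q \<le> x" "x \<le> A * q" "A / q \<le> y" "y \<le> A * q"
  shows "\<bar>x / y - 1\<bar> \<le> q\<^sup>2 - 1"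
proof -
  have "0 < A / q"
    using assms by simp
  then have x: "0 < x" and y: "0 < y"
    using assms by linarith+
  have "x / y \<le> (A * q) / (A / q)"
    using assms x y by (intro frac_le) auto
  also have "\<dots> = q\<^sup>2"
    using assms by (simp add: power2_eq_square)
  finally have upper: "x / y \<le> q\<^sup>2" .
  have "1 / q\<^sup>2 = (A / q) / (A * q)"
    using assms by (simp add: power2_eq_square)
  also have "\<dots> \<le> x / y"
    using assms x y by (intro frac_le) auto
  finally have lower: "1 / q\<^sup>2 \<le> x / y" .
  have q2: "1 \<le> q\<^sup>2"
    using assms(2) by (rule one_le_power)
  then have "1 - 1 / q\<^sup>2 = (q\<^sup>2 - 1) / q\<^sup>2"
    using assms(2) by (simp add: diff_divide_distrib)
  also have "\<dots> \<le> (q\<^sup>2 - 1) / 1"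
    using q2 by (intro divide_left_mono) auto
  finally have "1 - 1 / q\<^sup>2 \<le> q\<^sup>2 - 1"
    by simp
  with upper lower show ?thesis
    by (simp add: abs_le_iff)
qed

section \<open>A profile oscillating on the logarithmic scale\<close>

definition powers_of_two :: "real set" where
  "powers_of_two = range (\<lambda>k::nat. 2 ^ k)"

definition profile :: "real \<Rightarrow> real" where
  "profile x = (if 1 \<le> x then exp (- 2 * ln x - 20 * infdist (ln x) powers_of_two) else 0)"

lemma profile_nonneg: "0 \<le> profile x"
  by (simp add: profile_def)

lemma profile_pos: "1 \<le> x \<Longrightarrow> 0 < profile x"
  by (simp add: profile_def)

lemma profile_eq_0: "x < 1 \<Longrightarrow> profile x = 0"
  by (simp add: profile_def)

lemma borel_measurable_profile[measurable]: "profile \<in> borel_measurable borel"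
proof -
  have [measurable]: "(\<lambda>x::real. infdist x powers_of_two) \<in> borel_measurable borel"
    by (intro borel_measurable_continuous_onI continuous_intros)
  show ?thesis
    unfolding profile_def by measurable
qed

lemma profile_comparable:
  assumes "1 \<le> x" "1 \<le> u" "1 \<le> K" "x / K \<le> u" "u \<le> K * x"
  shows "profile u \<le> K ^ 22 * profile x" and "profile x \<le> K ^ 22 * profile u"
proof -
  have "K ^ 22 = K powr 22"
    using assms(3) by simp
  also have "\<dots> = exp (22 * ln K)"
    using assms(3) unfolding powr_def by simp
  finally have K22: "K ^ 22 = exp (22 * ln K)" .
  have le: "profile b \<le> K ^ 22 * profile a" if "1 \<le> a" "1 \<le> b" "\<bar>ln b - ln a\<bar> \<le> ln K" for a b
  proof -
    have "\<bar>infdist (ln b) powers_of_two - infdist (ln a) powers_of_two\<bar> \<le> \<bar>ln b - ln a\<bar>"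
      using infdist_triangle_abs[of "ln b" powers_of_two "ln a"] by (simp add: dist_real_def)
    then have "- 2 * ln b - 20 * infdist (ln b) powers_of_two
        \<le> 22 * ln K + (- 2 * ln a - 20 * infdist (ln a) powers_of_two)"
      using that(3) by (auto simp: abs_le_iff)
    then show ?thesis
      using that by (simp add: profile_def K22 mult_exp_exp)
  qed
  have "ln u \<le> ln K + ln x" "ln x - ln K \<le> ln u"
    using assms ln_mono[of u "K * x"] ln_mono[of "x / K" u] by (simp_all add: ln_mult ln_div)
  then have "\<bar>ln u - ln x\<bar> \<le> ln K"
    by linarith
  then show "profile u \<le> K ^ 22 * profile x" "profile x \<le> K ^ 22 * profile u"
    using le[of x u] le[of u x] assms(1,2) by (simp_all add: abs_minus_commute)
qed

lemma profile_le_inverse_square: "profile x \<le> indicator {1..} x / x\<^sup>2"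
proof (cases "1 \<le> x")
  case True
  then have "profile x \<le> exp (- 2 * ln x)"
    by (simp add: profile_def infdist_nonneg)
  also have "\<dots> = 1 / x\<^sup>2"
    using True by (simp add: exp_minus exp_double divide_inverse)
  finally show ?thesis
    using True by simp
qed (simp add: profile_def)

lemma infdist_powers_of_two_midpoint: "2 ^ k / 2 \<le> infdist (3 * 2 ^ k / 2) powers_of_two"
proof -
  have dist: "2 ^ k / 2 \<le> dist (3 * 2 ^ k / 2) (2 ^ j :: real)" for j :: nat
  proof (cases "j \<le> k")
    case True
    then have "(2::real) ^ j \<le> 2 ^ k"
      by (intro power_increasing) auto
    then show ?thesis
      using abs_ge_self[of "3 * 2 ^ k / 2 - (2::real) ^ j"] unfolding dist_real_def by linarith
  next
    case False
    then have "(2::real) ^ Suc k \<le> 2 ^ j"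
      by (intro power_increasing) auto
    then show ?thesis
      using abs_ge_minus_self[of "3 * 2 ^ k / 2 - (2::real) ^ j"] unfolding dist_real_def by simp
  qed
  have "powers_of_two \<noteq> {}"
    by (simp add: powers_of_two_def)
  then show ?thesis
    unfolding infdist_notempty[OF \<open>powers_of_two \<noteq> {}\<close>]
    by (rule cINF_greatest) (unfold powers_of_two_def, blast intro: dist)
qed

lemma profile_dip: "profile (exp (3 * 2 ^ k / 2)) * exp (9 * 2 ^ k) \<le> profile (exp (2 * 2 ^ k))"
proof -
  have "(2::real) * 2 ^ k \<in> powers_of_two"
    unfolding powers_of_two_def by (metis power_Suc rangeI)
  then have at_power: "profile (exp (2 * 2 ^ k)) = exp (- 4 * 2 ^ k)"
    by (simp add: profile_def)
  have "profile (exp (3 * 2 ^ k / 2)) \<le> exp (- 13 * 2 ^ k)"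
    using infdist_powers_of_two_midpoint[of k] by (simp add: profile_def)
  then have "profile (exp (3 * 2 ^ k / 2)) * exp (9 * 2 ^ k) \<le> exp (- 13 * 2 ^ k) * exp (9 * 2 ^ k)"
    by (rule mult_right_mono) simp
  also have "\<dots> = profile (exp (2 * 2 ^ k))"
    by (simp add: at_power mult_exp_exp)
  finally show ?thesis .
qed

lemma exp_dip_points:
  "2 \<le> exp (3 * 2 ^ k / 2 :: real)" "exp (3 * 2 ^ k / 2) + 1 \<le> exp (2 * 2 ^ k :: real)"
proof -
  define x :: real where "x = exp (3 * 2 ^ k / 2)"
  have "(1::real) \<le> 2 ^ k"
    by simp
  then show x: "2 \<le> x"
    using exp_ge_add_one_self[of "3 * 2 ^ k / 2"] unfolding x_def by linarith
  have "x * (1 + 2 ^ k / 2) \<le> x * exp (2 ^ k / 2)"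
    using exp_ge_add_one_self[of "2 ^ k / 2"] x by (intro mult_left_mono) auto
  also have "\<dots> = exp (2 * 2 ^ k)"
    by (simp add: x_def mult_exp_exp)
  finally have "x + x * 2 ^ k / 2 \<le> exp (2 * 2 ^ k)"
    by (simp add: algebra_simps)
  moreover have "2 * 1 \<le> x * 2 ^ k"
    using x \<open>1 \<le> 2 ^ k\<close> by (intro mult_mono) auto
  ultimately show "x + 1 \<le> exp (2 * 2 ^ k)"
    by linarith
qed

definition profile_mass :: real where
  "profile_mass = enn2real (\<integral>\<^sup>+x. ennreal (profile x) \<partial>lborel)"

lemma nn_integral_profile: "(\<integral>\<^sup>+x. ennreal (profile x) \<partial>lborel) = ennreal profile_mass"
proof -
  have "(\<integral>\<^sup>+x. ennreal (profile x) \<partial>lborel) \<le> (\<integral>\<^sup>+x. ennreal (indicator {1..} x / x\<^sup>2) \<partial>lborel)"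
    by (intro nn_integral_mono ennreal_leI profile_le_inverse_square)
  then have "(\<integral>\<^sup>+x. ennreal (profile x) \<partial>lborel) \<noteq> \<top>"
    by (auto simp: nn_integral_inverse_square_Ici top_unique)
  then show ?thesis
    by (simp add: profile_mass_def ennreal_enn2real_if)
qed

lemma profile_mass_pos: "0 < profile_mass"
proof (rule ccontr)
  assume "\<not> 0 < profile_mass"
  then have "(\<integral>\<^sup>+x. ennreal (profile x) \<partial>lborel) = 0"
    by (simp add: nn_integral_profile ennreal_eq_0_iff)
  then have "AE x in lborel. ennreal (profile x) = 0"
    by (simp add: nn_integral_0_iff_AE)
  then have "AE x in lborel. x \<notin> {1..2::real}"
    by (elim eventually_mono) (auto simp: ennreal_eq_0_iff dest: profile_pos)
  then have "{1..2::real} \<in> null_sets lborel"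
    by (subst AE_iff_null_sets) auto
  then show False
    by (simp add: null_sets_def)
qed

lemma nn_integral_normalised_profile: "(\<integral>\<^sup>+y. ennreal (profile y / profile_mass) \<partial>lborel) = 1"
  using nn_integral_divide_const[OF _ profile_nonneg profile_mass_pos nn_integral_profile] profile_mass_pos
  by simp

section \<open>Densities with the profile as their tail\<close>

locale profile_tail =
  fixes p :: "real \<Rightarrow> real" and c :: real
  assumes borel_measurable_p[measurable]: "p \<in> borel_measurable borel"
    and p_nonneg: "\<And>y. 0 \<le> p y" and c_pos: "0 < c"
    and p_tail: "\<And>y. 1 \<le> y \<Longrightarrow> p y = profile y / c"
begin

lemma loc_bounds:
  assumes "0 < d" "1 \<le> z" "1 \<le> x" "1 \<le> K" "{z<..z+d} \<subseteq> {x/K..K*x}"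
  shows "profile x * d / (c * K ^ 22) \<le> loc (density lborel p) d z"
    and "loc (density lborel p) d z \<le> K ^ 22 * profile x * d / c"
proof -
  have "profile x / (c * K ^ 22) \<le> p u \<and> p u \<le> K ^ 22 * profile x / c"
    if "u \<in> {z<..z+d}" for u
  proof -
    have u: "1 \<le> u" "x / K \<le> u" "u \<le> K * x"
      using that assms(2,5) by auto
    note comparable = profile_comparable[OF assms(3) u(1) assms(4) u(2,3)]
    have "profile x / (c * K ^ 22) \<le> profile u / c"
      using comparable(2) c_pos assms(4) by (simp add: field_simps)
    moreover have "profile u / c \<le> K ^ 22 * profile x / c"
      using comparable(1) c_pos by (simp add: divide_right_mono)
    ultimately show ?thesis
      using p_tail[OF u(1)] by simp
  qed
  moreover have "0 \<le> profile x / (c * K ^ 22)"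
    using c_pos profile_nonneg by simp
  ultimately have "profile x / (c * K ^ 22) * d \<le> loc (density lborel p) d z"
    and "loc (density lborel p) d z \<le> K ^ 22 * profile x / c * d"
    using loc_density_bounds[OF borel_measurable_p p_nonneg assms(1)] by blast+
  then show "profile x * d / (c * K ^ 22) \<le> loc (density lborel p) d z"
    and "loc (density lborel p) d z \<le> K ^ 22 * profile x * d / c"
    by (simp_all add: field_simps)
qed

lemma loc_pos:
  assumes "0 < d" "1 \<le> z"
  shows "0 < loc (density lborel p) d z"
proof -
  have "z / (1 + d) \<le> z" "z + d \<le> (1 + d) * z"
    using assms by (simp_all add: field_simps mult_le_cancel_left1)
  then have "{z<..z+d} \<subseteq> {z / (1 + d)..(1 + d) * z}"
    by auto
  then have "profile z * d / (c * (1 + d) ^ 22) \<le> loc (density lborel p) d z"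
    using assms by (intro loc_bounds) auto
  moreover have "0 < profile z * d / (c * (1 + d) ^ 22)"
    using assms c_pos profile_pos by simp
  ultimately show ?thesis
    by linarith
qed

lemma abs_loc_shift_ratio_le:
  assumes d: "0 < d" and z: "t + d + 1 < z" and s: "\<bar>s\<bar> \<le> t"
  shows "\<bar>loc (density lborel p) d (z + s) / loc (density lborel p) d z - 1\<bar>
           \<le> ((z + (t + d)) / (z - (t + d))) ^ 44 - 1"
proof -
  define T where "T = t + d"
  define K where "K = (z + T) / (z - T)"
  have T: "0 < T" "T < z - 1"
    using s d z by (auto simp: T_def)
  have K: "1 \<le> K"
    using T by (simp add: K_def field_simps)
  have window: "{z - T..z + T} \<subseteq> {z / K..K * z}"
    using T by (auto simp: K_def field_simps intro: order.trans)
  define A where "A = profile z * d / c"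
  have A: "0 < A"
    using T d c_pos profile_pos[of z] by (simp add: A_def)
  have bounds: "A / K ^ 22 \<le> loc (density lborel p) d (z + r) \<and>
      loc (density lborel p) d (z + r) \<le> A * K ^ 22" if "\<bar>r\<bar> \<le> t" for r
  proof -
    have "{z + r<..z + r + d} \<subseteq> {z / K..K * z}" "1 \<le> z + r"
      using window that T d by (auto simp: T_def abs_le_iff)
    then show ?thesis
      using loc_bounds[of d "z + r" z K] T d K by (simp add: A_def field_simps)
  qed
  have "\<bar>loc (density lborel p) d (z + s) / loc (density lborel p) d z - 1\<bar> \<le> (K ^ 22)\<^sup>2 - 1"
    using bounds[OF s] bounds[of 0] s K A by (intro abs_ratio_le_of_bounds[of A]) auto
  then show ?thesis
    by (simp add: K_def T_def flip: power_mult)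
qed

lemma in_L_Delta:
  assumes d: "0 < d"
  shows "in_L_Delta d (density lborel p)"
  unfolding in_L_Delta_def
proof (intro conjI allI impI)
  show "\<forall>\<^sub>F z in at_top. 0 < loc (density lborel p) d z"
    using eventually_ge_at_top[of 1] by eventually_elim (use d loc_pos in auto)
  fix t \<epsilon> :: real
  assume "0 < t" "0 < \<epsilon>"
  have "((\<lambda>z. ((z + (t + d)) / (z - (t + d))) ^ 44) \<longlongrightarrow> 1) at_top"
    by real_asymp
  then have "\<forall>\<^sub>F z in at_top. ((z + (t + d)) / (z - (t + d))) ^ 44 < 1 + \<epsilon>"
    using \<open>0 < \<epsilon>\<close> by (intro order_tendstoD) auto
  with eventually_gt_at_top[of "t + d + 1"]
  show "\<forall>\<^sub>F z in at_top. \<forall>s. \<bar>s\<bar> \<le> t \<longrightarrow>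
          \<bar>loc (density lborel p) d (z + s) / loc (density lborel p) d z - 1\<bar> \<le> \<epsilon>"
    by eventually_elim (use abs_loc_shift_ratio_le[OF d] in \<open>fastforce\<close>)
qed

lemma loc_dominated:
  assumes d: "0 < d"
  shows "\<forall>\<^sub>F z in at_top. \<forall>u\<in>{z/2 - d..z}.
           loc (density lborel p) d u \<le> 4 ^ 44 * loc (density lborel p) d z"
  using eventually_ge_at_top[of "4 * d + 2"]
proof eventually_elim
  case (elim z)
  have "{z<..z+d} \<subseteq> {z/4..4*z}"
    using d elim by auto
  then have lower: "profile z * d / (c * 4 ^ 22) \<le> loc (density lborel p) d z"
    using loc_bounds(1)[of d z z 4] d elim by simp
  show ?case
  proof
    fix u
    assume u: "u \<in> {z/2 - d..z}"
    have "{u<..u+d} \<subseteq> {z/4..4*z}" "1 \<le> u"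
      using u d elim by auto
    then have "loc (density lborel p) d u \<le> 4 ^ 22 * profile z * d / c"
      using loc_bounds(2)[of d u z 4] d elim by simp
    also have "\<dots> = 4 ^ 44 * (profile z * d / (c * 4 ^ 22))"
      using c_pos by (simp add: field_simps)
    also have "\<dots> \<le> 4 ^ 44 * loc (density lborel p) d z"
      using lower by (intro mult_left_mono) auto
    finally show "loc (density lborel p) d u \<le> 4 ^ 44 * loc (density lborel p) d z" .
  qed
qed

lemma loc_ge_profile:
  assumes "2 \<le> y" "y \<le> z" "z \<le> y + 1"
  shows "profile y / (c * 2 ^ 22) \<le> loc (density lborel p) 1 z"
proof -
  have "{z<..z+1} \<subseteq> {y/2..2*y}"
    using assms by auto
  then show ?thesis
    using loc_bounds(1)[of 1 z y 2] assms by simp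
qed

lemma loc_dip_le:
  "loc (density lborel p) 1 (exp (3 * 2 ^ k / 2)) * exp (9 * 2 ^ k) \<le> 2 ^ 22 * profile (exp (2 * 2 ^ k)) / c"
proof -
  define x :: real where "x = exp (3 * 2 ^ k / 2)"
  have "1 \<le> x"
    by (simp add: x_def)
  then have "{x<..x+1} \<subseteq> {x/2..2*x}"
    by auto
  then have "loc (density lborel p) 1 x \<le> 2 ^ 22 * profile x / c"
    using loc_bounds(2)[of 1 x x 2] \<open>1 \<le> x\<close> by simp
  then have "loc (density lborel p) 1 x * exp (9 * 2 ^ k) \<le> 2 ^ 22 * profile x / c * exp (9 * 2 ^ k)"
    by (rule mult_right_mono) simp
  also have "\<dots> = 2 ^ 22 * (profile x * exp (9 * 2 ^ k)) / c"
    by simp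
  also have "\<dots> \<le> 2 ^ 22 * profile (exp (2 * 2 ^ k)) / c"
    using profile_dip[of k] c_pos by (simp add: x_def divide_right_mono)
  finally show ?thesis
    by (simp add: x_def)
qed

lemma loc_dip_ratio:
  "loc (density lborel p) 1 (exp (3 * 2 ^ k / 2)) * exp (9 * 2 ^ k) \<le> 2 ^ 44 * loc (density lborel p) 1 (exp (2 * 2 ^ k))"
proof -
  have "loc (density lborel p) 1 (exp (3 * 2 ^ k / 2)) * exp (9 * 2 ^ k)
      \<le> 2 ^ 44 * (profile (exp (2 * 2 ^ k)) / (c * 2 ^ 22))"
    using loc_dip_le[of k] c_pos by (simp add: field_simps)
  also have "\<dots> \<le> 2 ^ 44 * loc (density lborel p) 1 (exp (2 * 2 ^ k))"
    using exp_dip_points[of k] by (intro mult_left_mono loc_ge_profile) auto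
  finally show ?thesis .
qed

lemma not_locally_almost_decreasing: "\<not> locally_almost_decreasing (density lborel p)"
proof
  assume "locally_almost_decreasing (density lborel p)"
  then obtain x0 where pos: "\<And>x. x0 \<le> x \<Longrightarrow> 0 < loc (density lborel p) 1 x"
    and "bdd_above {loc (density lborel p) 1 y / loc (density lborel p) 1 x | x y. x0 \<le> x \<and> x \<le> y}"
    unfolding locally_almost_decreasing_def by (meson zero_less_one)
  then obtain B where
    B: "\<And>x y. x0 \<le> x \<Longrightarrow> x \<le> y \<Longrightarrow> loc (density lborel p) 1 y / loc (density lborel p) 1 x \<le> B"
    unfolding bdd_above_def by blast
  have "\<forall>\<^sub>F k in sequentially. x0 \<le> exp (3 * 2 ^ k / 2)"
    by real_asymp
  moreover have "\<forall>\<^sub>F k in sequentially. B < exp (9 * 2 ^ k) / 2 ^ 44"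
    by real_asymp
  ultimately obtain k where k: "x0 \<le> exp (3 * 2 ^ k / 2)" "B < exp (9 * 2 ^ k) / 2 ^ 44"
    using eventually_happens'[OF sequentially_bot eventually_conj] by blast
  have "exp (9 * 2 ^ k) / 2 ^ 44
      \<le> loc (density lborel p) 1 (exp (2 * 2 ^ k)) / loc (density lborel p) 1 (exp (3 * 2 ^ k / 2))"
    using loc_dip_ratio[of k] pos[OF k(1)] by (simp add: field_simps)
  also have "\<dots> \<le> B"
    using B k(1) by simp
  finally show False
    using k(2) by simp
qed

end

section \<open>The counterexample\<close>

definition F_example_density :: "real \<Rightarrow> real" where
  "F_example_density y = (indicator {..-1} y / y\<^sup>2 + profile y / profile_mass) / 2"

definition F_example :: "real measure" where
  "F_example = density lborel F_example_density"

lemma sets_F_example[simp]: "sets F_example = sets borel"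
  by (simp add: F_example_def)

lemma borel_measurable_F_example_density[measurable]: "F_example_density \<in> borel_measurable borel"
  unfolding F_example_density_def by measurable

lemma F_example_density_nonneg: "0 \<le> F_example_density y"
  using profile_mass_pos by (simp add: F_example_density_def profile_nonneg)

lemma F_example_density_of_nonneg: "0 \<le> y \<Longrightarrow> F_example_density y = profile y / (2 * profile_mass)"
  by (simp add: F_example_density_def)

lemma F_example_density_of_neg: "y < 0 \<Longrightarrow> F_example_density y = indicator {..-1} y / (2 * y\<^sup>2)"
  by (simp add: F_example_density_def profile_eq_0)

lemma prob_space_F_example: "prob_space F_example"
proof
  have "(\<integral>\<^sup>+y. ennreal (indicator {..-1} y / y\<^sup>2 + profile y / profile_mass) \<partial>lborel)
      = (\<integral>\<^sup>+y. ennreal (indicator {..-1} y / y\<^sup>2) + ennreal (profile y / profile_mass) \<partial>lborel)"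
    using profile_mass_pos by (intro nn_integral_cong) (simp add: profile_nonneg)
  also have "\<dots> = ennreal 2"
    by (simp add: nn_integral_add nn_integral_inverse_square_Iic nn_integral_normalised_profile)
  finally have "(\<integral>\<^sup>+y. ennreal (F_example_density y) \<partial>lborel) = ennreal (2 / 2)"
    unfolding F_example_density_def
    using profile_mass_pos profile_nonneg by (intro nn_integral_divide_const) auto
  then show "emeasure F_example (space F_example) = 1"
    by (simp add: F_example_def emeasure_density)
qed

lemma q1_F_example: "q1 F_example = 1/2"
proof -
  have "emeasure F_example {0..} = (\<integral>\<^sup>+y. ennreal (F_example_density y) * indicator {0..} y \<partial>lborel)"
    unfolding F_example_def by (rule emeasure_density) auto
  also have "\<dots> = (\<integral>\<^sup>+y. ennreal (profile y / (2 * profile_mass)) \<partial>lborel)"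
    by (intro nn_integral_cong) (auto simp: indicator_def F_example_density_of_nonneg profile_eq_0)
  also have "\<dots> = ennreal (1/2)"
    using nn_integral_divide_const[OF _ profile_nonneg _ nn_integral_profile, of "2 * profile_mass"]
      profile_mass_pos by simp
  finally have emeasure: "emeasure F_example {0..} = ennreal (1/2)" .
  have "enn2real (ennreal (1/2 :: real)) = 1/2"
    by (rule enn2real_ennreal) simp
  then show ?thesis
    unfolding q1_def measure_def emeasure .
qed

lemma F1_F_example: "F1 F_example = density lborel (\<lambda>y. profile y / profile_mass)"
proof -
  have "F1 F_example = density lborel (\<lambda>y. ennreal (F_example_density y) * ennreal (indicator {0..} y / (1/2)))"
    unfolding F1_def q1_F_example unfolding F_example_def
    by (rule density_density_eq) auto
  also have "\<dots> = density lborel (\<lambda>y. profile y / profile_mass)"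
    by (intro density_cong)
      (auto simp: ennreal_mult''[symmetric] indicator_def F_example_density_of_nonneg profile_eq_0)
  finally show ?thesis .
qed

lemma F2_F_example: "F2 F_example = density lborel (\<lambda>y. indicator {..-1} y / y\<^sup>2)"
proof -
  have "F2 F_example = density lborel (\<lambda>y. ennreal (F_example_density y) * ennreal (indicator {..<0} y / (1 - 1/2)))"
    unfolding F2_def q1_F_example unfolding F_example_def
    by (rule density_density_eq) auto
  also have "\<dots> = density lborel (\<lambda>y. indicator {..-1} y / y\<^sup>2)"
    by (intro density_cong)
      (auto simp: ennreal_mult''[symmetric] indicator_def F_example_density_of_neg)
  finally show ?thesis .
qed

lemma heavy_tailed_F2_F_example: "heavy_tailed_F2 F_example"
  unfolding heavy_tailed_F2_def F2_F_example
proof (intro allI impI)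
  fix \<epsilon> :: real
  assume "0 < \<epsilon>"
  then have "\<forall>\<^sub>F w in at_top. w\<^sup>2 \<le> exp (\<epsilon> * w)"
    by real_asymp
  then obtain W where W: "1 \<le> W" "\<And>w. W \<le> w \<Longrightarrow> w\<^sup>2 \<le> exp (\<epsilon> * w)"
    unfolding eventually_at_top_linorder by (metis max.cobounded1 max.boundedE)
  have "\<infinity> = (\<integral>\<^sup>+y. indicator {..-W} y \<partial>lborel)"
    by (simp add: emeasure_lborel_atMost)
  also have "\<dots> \<le> (\<integral>\<^sup>+y. ennreal (indicator {..-1} y / y\<^sup>2) * ennreal (exp (\<epsilon> * - y)) \<partial>lborel)"
  proof (intro nn_integral_mono)
    fix y :: real
    show "indicator {..-W} y \<le> ennreal (indicator {..-1} y / y\<^sup>2) * ennreal (exp (\<epsilon> * - y))"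
    proof (cases "y \<le> -W")
      case True
      then have "y\<^sup>2 \<le> exp (\<epsilon> * - y)" "y \<le> -1"
        using W W(2)[of "-y"] by auto
      then have "1 \<le> indicator {..-1} y / y\<^sup>2 * exp (\<epsilon> * - y)"
        by (simp add: field_simps)
      then show ?thesis
        using True by (simp add: ennreal_mult''[symmetric] ennreal_leI del: ennreal_1 ennreal_eq_1 ennreal_le_1)
    qed simp
  qed
  also have "\<dots> = (\<integral>\<^sup>+y. ennreal (exp (\<epsilon> * - y)) \<partial>density lborel (\<lambda>y. ennreal (indicator {..-1} y / y\<^sup>2)))"
    by (subst nn_integral_density) auto
  finally show "(\<integral>\<^sup>+y. ennreal (exp (\<epsilon> * - y)) \<partial>density lborel (\<lambda>y. ennreal (indicator {..-1} y / y\<^sup>2))) = \<infinity>"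
    by (simp add: top_unique)
qed

interpretation F1_tail: profile_tail "\<lambda>y. profile y / profile_mass" profile_mass
  by unfold_locales (auto intro: divide_nonneg_pos profile_nonneg profile_mass_pos)

interpretation F_tail: profile_tail F_example_density "2 * profile_mass"
  by unfold_locales (auto simp: F_example_density_nonneg profile_mass_pos F_example_density_of_nonneg)

lemma S_loc_F1_F_example: "S_loc (F1 F_example)"
  unfolding F1_F_example
proof (rule S_locI_nonneg)
  show "prob_space (density lborel (\<lambda>y. profile y / profile_mass))"
    by standard (simp add: emeasure_density nn_integral_normalised_profile)
  have "AE x in lborel. 0 < ennreal (profile x / profile_mass) \<longrightarrow> 0 \<le> x"
    by (auto simp: profile_def)
  then show "AE x in density lborel (\<lambda>y. profile y / profile_mass). 0 \<le> x"
    by (subst AE_density) auto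
qed (use F1_tail.in_L_Delta F1_tail.loc_dominated in auto)

lemma not_locally_almost_decreasing_F1_F_example: "\<not> locally_almost_decreasing (F1 F_example)"
  unfolding F1_F_example by (rule F1_tail.not_locally_almost_decreasing)

lemma loc_F_example_negative:
  assumes "1 \<le> x" "x + 1 \<le> y"
  shows "1 / (2 * y\<^sup>2) \<le> loc F_example 1 (x - y - 1)"
proof -
  have "1 / (2 * y\<^sup>2) \<le> F_example_density u \<and> F_example_density u \<le> 1 / 2"
    if "u \<in> {x - y - 1<..x - y - 1 + 1}" for u
  proof -
    have u: "u \<le> -1" "-y \<le> u"
      using that assms by auto
    have "1 * 1 \<le> (-u) * (-u)" "(-u) * (-u) \<le> y * y"
      using u by (intro mult_mono; simp)+
    then have "1 \<le> u\<^sup>2" "u\<^sup>2 \<le> y\<^sup>2"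
      by (simp_all add: power2_eq_square)
    then show ?thesis
      using u by (simp add: F_example_density_of_neg frac_le)
  qed
  then show ?thesis
    using loc_density_bounds(1)[OF borel_measurable_F_example_density F_example_density_nonneg
        zero_less_one, where a = "1 / (2 * y\<^sup>2)" and b = "1 / 2" and z = "x - y - 1"]
    by (simp add: F_example_def)
qed

lemma loc_convolution_F_example_ge:
  assumes "1 \<le> x" "x + 1 \<le> y"
  shows "profile y / (2 * profile_mass * 2 ^ 22) * (1 / (2 * y\<^sup>2)) \<le> loc (F_example \<star> F_example) 1 x"
proof -
  define Q where "Q = profile y / (2 * profile_mass * 2 ^ 22)"
  have "Q \<le> loc F_example 1 (x - v)" if "v \<in> {x - y - 1<..x - y - 1 + 1}" for v
    unfolding Q_def F_example_def using that assms by (intro F_tail.loc_ge_profile) auto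
  then have "Q * loc F_example 1 (x - y - 1) \<le> loc (F_example \<star> F_example) 1 x"
    using loc_convolution_ge_measure[OF prob_space_F_example sets_F_example, of "{x - y - 1<..x - y - 1 + 1}" Q 1 x]
      profile_nonneg profile_mass_pos by (simp add: Q_def loc_def)
  moreover have "Q * (1 / (2 * y\<^sup>2)) \<le> Q * loc F_example 1 (x - y - 1)"
    using assms profile_nonneg profile_mass_pos loc_F_example_negative[OF assms]
    by (intro mult_left_mono) (auto simp: Q_def)
  ultimately show ?thesis
    unfolding Q_def by linarith
qed

lemma F_example_convolution_dip:
  "loc F_example 1 (exp (3 * 2 ^ k / 2)) * exp (5 * 2 ^ k)
     \<le> 2 ^ 45 * loc (F_example \<star> F_example) 1 (exp (3 * 2 ^ k / 2))"
proof -
  define x :: real where "x = exp (3 * 2 ^ k / 2)"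
  define y :: real where "y = exp (2 * 2 ^ k)"
  have "y\<^sup>2 = exp (4 * 2 ^ k)"
    by (simp add: y_def power2_eq_square mult_exp_exp)
  have "loc F_example 1 x * exp (5 * 2 ^ k) * exp (4 * 2 ^ k) = loc F_example 1 x * exp (9 * 2 ^ k)"
    by (simp add: mult_exp_exp)
  also have "\<dots> \<le> 2 ^ 45 * y\<^sup>2 * (profile y / (2 * profile_mass * 2 ^ 22) * (1 / (2 * y\<^sup>2)))"
    using F_tail.loc_dip_le[of k] by (simp add: x_def y_def F_example_def field_simps)
  also have "\<dots> \<le> 2 ^ 45 * y\<^sup>2 * loc (F_example \<star> F_example) 1 x"
    using exp_dip_points[of k] by (intro mult_left_mono loc_convolution_F_example_ge) (auto simp: x_def y_def)
  finally show ?thesis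
    unfolding x_def \<open>y\<^sup>2 = exp (4 * 2 ^ k)\<close> by (simp add: mult.commute[of "exp _"])
qed

lemma F_example_not_loc_convolution_asymp_equiv:
  "\<not> loc (F_example \<star> F_example) 1 \<sim>[at_top] (\<lambda>x. 2 * loc F_example 1 x)"
proof
  assume equiv: "loc (F_example \<star> F_example) 1 \<sim>[at_top] (\<lambda>x. 2 * loc F_example 1 x)"
  have pos: "\<forall>\<^sub>F z in at_top. 0 < loc F_example 1 z"
    using eventually_ge_at_top[of 1] by eventually_elim (simp add: F_example_def F_tail.loc_pos)
  then have "((\<lambda>z. loc (F_example \<star> F_example) 1 z / (2 * loc F_example 1 z)) \<longlongrightarrow> 1) at_top"
    by (intro asymp_equivD_strong[OF equiv]) (auto elim: eventually_mono)
  then have "\<forall>\<^sub>F z in at_top. loc (F_example \<star> F_example) 1 z / (2 * loc F_example 1 z) < 2"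
    by (intro order_tendstoD) auto
  with pos have "\<forall>\<^sub>F z in at_top. 0 < loc F_example 1 z \<and>
      loc (F_example \<star> F_example) 1 z < 4 * loc F_example 1 z"
    by eventually_elim (simp add: field_simps)
  moreover have "filterlim (\<lambda>k::nat. exp (3 * 2 ^ k / 2 :: real)) at_top sequentially"
    by real_asymp
  ultimately have "\<forall>\<^sub>F k in sequentially. 0 < loc F_example 1 (exp (3 * 2 ^ k / 2)) \<and>
      loc (F_example \<star> F_example) 1 (exp (3 * 2 ^ k / 2)) < 4 * loc F_example 1 (exp (3 * 2 ^ k / 2))"
    by (rule eventually_compose_filterlim)
  moreover have "\<forall>\<^sub>F k in sequentially. 2 ^ 47 < exp (5 * 2 ^ k :: real)"
    by real_asymp
  ultimately obtain k where k: "0 < loc F_example 1 (exp (3 * 2 ^ k / 2))"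
    "loc (F_example \<star> F_example) 1 (exp (3 * 2 ^ k / 2)) < 4 * loc F_example 1 (exp (3 * 2 ^ k / 2))"
    "2 ^ 47 < exp (5 * 2 ^ k :: real)"
    using eventually_happens'[OF sequentially_bot eventually_conj] by blast
  have "loc F_example 1 (exp (3 * 2 ^ k / 2)) * exp (5 * 2 ^ k)
      < 2 ^ 47 * loc F_example 1 (exp (3 * 2 ^ k / 2))"
    using F_example_convolution_dip[of k] k(2) by simp
  with k(1,3) show False
    by (simp add: mult.commute[of _ "exp _"])
qed

theorem proposition3p1:
  shows "\<exists>F. is_real_distr F \<and> 0 < q1 F \<and> q1 F < 1 \<and>
     heavy_tailed_F2 F \<and>
     \<not> locally_almost_decreasing (F1 F) \<and>
     S_loc (F1 F) \<and>
     (\<exists>d>0. \<not> ((loc (F \<star> F) d) \<sim>[at_top] (\<lambda>x. 2 * loc F d x)))"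
proof (intro exI conjI)
  show "is_real_distr F_example"
    using prob_space_F_example by (simp add: is_real_distr_def)
  show "0 < q1 F_example" "q1 F_example < 1"
    by (simp_all add: q1_F_example)
  show "\<not> loc (F_example \<star> F_example) 1 \<sim>[at_top] (\<lambda>x. 2 * loc F_example 1 x)"
    by (rule F_example_not_loc_convolution_asymp_equiv)
qed (simp_all add: heavy_tailed_F2_F_example not_locally_almost_decreasing_F1_F_example S_loc_F1_F_example)

end
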